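(* Let $\beta_\gamma$ be the bundle event structure with events $\{a,b,c\}$ (distinct), conflict $a\#b$ (and $b\#a$), and the single bundle $\{a,b\}\mapsto c$; its configurations are $\emptyset,\{a\},\{b\},\{a,c\},\{b,c\}$. Then there is no GES $\gamma$ with $\mathcal{C}(\gamma)=\mathcal{C}(\beta_\gamma)$.
   Context: A bundle event structure (BES) is $\beta=(E,\#,\mapsto)$ with $\#\subseteq E^2$ irreflexive and symmetric, $\mapsto\subseteq 2^E\times E$, satisfying stability: if $X\mapsto e$ then $e_1\#e_2$ for all distinct $e_1,e_2\in X$. Its traces are finite sequences $e_1\cdots e_n$ of pairwise distinct events, pairwise not in conflict, such that $X\mapsto e_i$ implies $X\cap\{e_1,\ldots,e_{i-1}\}\neq\emptyset$; its configurations $\mathcal{C}(\beta)$ are the event sets of its traces. A GES is $\gamma=(E,\#,\to,\lhd)$ with $\#\subseteq E^2$ irreflexive symmetric, $\to\subseteq E^2$, $\lhd\subseteq E^3$ with $(c,m,t)\in\lhd$ ("$m$ adds cause $c$ to $t$") implying $\neg(c\to t)$. $\mathrm{ic}(e)=\{e'\mid e'\to e\}$, $\mathrm{ac}(H,e)=\{e'\mid\exists a\in H.(e',a,e)\in\lhd\}$. $X\to_g Y$ iff $X\subseteq Y\subseteq E$, $Y$ conflict-free, $\mathrm{ic}(e)\cup\mathrm{ac}(X,e)\subseteq X$ for all $e\in Y\setminus X$, and for all $t,m\in Y\setminus X$, $c\in E$: $(c,m,t)\in\lhd\Rightarrow c\in X$. $\mathcal{C}(\gamma)$ is the set of subsets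 of $E$ reachable from $\emptyset$ by finitely many $\to_g$-transitions. *)

theory Defs
  imports Main
begin

text \<open>A BES is given by its event set E, conflict relation cf and bundle relation bun
  (pairs (X, e) meaning X \<mapsto> e).\<close>

definition is_BES :: "'a set \<Rightarrow> ('a \<times> 'a) set \<Rightarrow> ('a set \<times> 'a) set \<Rightarrow> bool" where
  "is_BES E cf bun \<longleftrightarrow>
     cf \<subseteq> E \<times> E \<and> irrefl cf \<and> sym cf \<and>
     (\<forall>(X, e) \<in> bun. X \<subseteq> E \<and> e \<in> E) \<and>
     (\<forall>(X, e) \<in> bun. \<forall>e1 \<in> X. \<forall>e2 \<in> X. e1 \<noteq> e2 \<longrightarrow> (e1, e2) \<in> cf)"

definition BES_trace :: "'a set \<Rightarrow> ('a \<times> 'a) set \<Rightarrow> ('a set \<times> 'a) set \<Rightarrow> 'a list \<Rightarrow> bool" where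
  "BES_trace E cf bun t \<longleftrightarrow>
     set t \<subseteq> E \<and> distinct t \<and>
     (\<forall>i < length t. \<forall>j < length t. (t ! i, t ! j) \<notin> cf) \<and>
     (\<forall>i < length t. \<forall>X. (X, t ! i) \<in> bun \<longrightarrow> X \<inter> set (take i t) \<noteq> {})"

definition BES_configs :: "'a set \<Rightarrow> ('a \<times> 'a) set \<Rightarrow> ('a set \<times> 'a) set \<Rightarrow> 'a set set" where
  "BES_configs E cf bun = {set t | t. BES_trace E cf bun t}"

text \<open>A GES is given by events E, conflict cf, initial causality ca (pairs (e', e) meaning
  e' \<rightarrow> e) and adding relation ad (triples (c, m, t): m adds cause c to t).\<close>

definition is_GES :: "'a set \<Rightarrow> ('a \<times> 'a) set \<Rightarrow> ('a \<times> 'a) set \<Rightarrow> ('a \<times> 'a \<times> 'a) set \<Rightarrow> bool" where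
  "is_GES E cf ca ad \<longleftrightarrow>
     cf \<subseteq> E \<times> E \<and> irrefl cf \<and> sym cf \<and> ca \<subseteq> E \<times> E \<and> ad \<subseteq> E \<times> E \<times> E \<and>
     (\<forall>c m t. (c, m, t) \<in> ad \<longrightarrow> (c, t) \<notin> ca)"

definition ic :: "('a \<times> 'a) set \<Rightarrow> 'a \<Rightarrow> 'a set" where
  "ic ca e = {e'. (e', e) \<in> ca}"

definition ac :: "('a \<times> 'a \<times> 'a) set \<Rightarrow> 'a set \<Rightarrow> 'a \<Rightarrow> 'a set" where
  "ac ad H e = {e'. \<exists>a \<in> H. (e', a, e) \<in> ad}"

definition GES_step ::
  "'a set \<Rightarrow> ('a \<times> 'a) set \<Rightarrow> ('a \<times> 'a) set \<Rightarrow> ('a \<times> 'a \<times> 'a) set \<Rightarrow> 'a set \<Rightarrow> 'a set \<Rightarrow> bool" where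
  "GES_step E cf ca ad X Y \<longleftrightarrow>
     X \<subseteq> Y \<and> Y \<subseteq> E \<and>
     (\<forall>e1 \<in> Y. \<forall>e2 \<in> Y. (e1, e2) \<notin> cf) \<and>
     (\<forall>e \<in> Y - X. ic ca e \<union> ac ad X e \<subseteq> X) \<and>
     (\<forall>t \<in> Y - X. \<forall>m \<in> Y - X. \<forall>c \<in> E. (c, m, t) \<in> ad \<longrightarrow> c \<in> X)"

definition GES_configs :: "'a set \<Rightarrow> ('a \<times> 'a) set \<Rightarrow> ('a \<times> 'a) set \<Rightarrow> ('a \<times> 'a \<times> 'a) set \<Rightarrow> 'a set set" where
  "GES_configs E cf ca ad = {Y. (GES_step E cf ca ad)\<^sup>*\<^sup>* {} Y}"

end

theory Submission
  imports Defs
begin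

text \<open>In a GES, an event c that occurs in a configuration Y was added by some step out of a
  configuration X \<subseteq> Y - {c}, which therefore contains the initial causes of c and every
  cause c' with (c', c, c) in the adding relation. The configurations {a, c} and {b, c} give two
  such sets inside {a} and {b}; being disjoint, they force c to have no such causes at all. Then
  {c} is reachable in one step from the empty set, whereas the bundle {a, b} \<mapsto> c forbids {c}
  as a configuration of the BES.\<close>

lemma GES_step_from_empty_singleton:
  assumes "c \<in> E" "(c, c) \<notin> cf" "ic ca c = {}" "\<forall>c' \<in> E. (c', c, c) \<notin> ad"
  shows "GES_step E cf ca ad {} {c}"
  using assms by (auto simp: GES_step_def ac_def)

lemma GES_config_subset:
  assumes "(GES_step E cf ca ad)\<^sup>*\<^sup>* {} Y"
  shows "Y \<subseteq> E"
  using assms by (induction rule: rtranclp_induct) (auto simp: GES_step_def)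

lemma GES_config_entry:
  assumes "(GES_step E cf ca ad)\<^sup>*\<^sup>* {} Y" "c \<in> Y"
  obtains X where "X \<subseteq> Y" "c \<notin> X" "ic ca c \<subseteq> X" "\<forall>c' \<in> E. (c', c, c) \<in> ad \<longrightarrow> c' \<in> X"
  using assms
proof (induction arbitrary: thesis rule: rtranclp_induct)
  case base
  then show ?case by simp
next
  case (step Y Z)
  have "Y \<subseteq> Z"
    using step.hyps(2) by (simp add: GES_step_def)
  show ?case
  proof (cases "c \<in> Y")
    case True
    show ?thesis
    proof (rule step.IH[OF _ True])
      fix X
      assume "X \<subseteq> Y" "c \<notin> X" "ic ca c \<subseteq> X" "\<forall>c' \<in> E. (c', c, c) \<in> ad \<longrightarrow> c' \<in> X"
      then show thesis
        using step.prems(1) \<open>Y \<subseteq> Z\<close> by blast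
    qed
  next
    case False
    with step.prems(2) have c_added: "c \<in> Z - Y"
      by blast
    have "ic ca c \<subseteq> Y" "\<forall>c' \<in> E. (c', c, c) \<in> ad \<longrightarrow> c' \<in> Y"
      using step.hyps(2) c_added unfolding GES_step_def by blast+
    then show ?thesis
      using step.prems(1) \<open>Y \<subseteq> Z\<close> False by blast
  qed
qed

lemma singleton_BES_config_no_bundle:
  assumes "{e} \<in> BES_configs E cf bun"
  shows "(X, e) \<notin> bun"
proof
  assume bun_e: "(X, e) \<in> bun"
  obtain t where t: "BES_trace E cf bun t" "set t = {e}"
    using assms unfolding BES_configs_def by blast
  then have "length t = 1"
    by (metis BES_trace_def distinct_card is_singletonI is_singleton_altdef)
  with t(2) have "t = [e]"
    by (cases t) auto
  with t(1) bun_e show False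
    unfolding BES_trace_def by auto
qed

lemma BES_config_bundle_member_target:
  assumes "a \<noteq> b" "a \<noteq> c" "b \<noteq> c" "x \<in> {a, b}"
  shows "{x, c} \<in> BES_configs {a, b, c} {(a, b), (b, a)} {({a, b}, c)}"
proof -
  have "BES_trace {a, b, c} {(a, b), (b, a)} {({a, b}, c)} [x, c]"
    using assms unfolding BES_trace_def by (auto simp: less_Suc_eq nth_Cons split: nat.splits)
  then show ?thesis
    unfolding BES_configs_def by (intro CollectI exI[of _ "[x, c]"]) simp
qed

theorem lemma11:
  fixes a b c :: 'a
  assumes "a \<noteq> b" and "a \<noteq> c" and "b \<noteq> c"
  shows "\<not> (\<exists>E cf ca ad. is_GES E cf ca ad \<and>
            GES_configs E cf ca ad = BES_configs {a, b, c} {(a, b), (b, a)} {({a, b}, c)})"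
proof
  let ?C = "BES_configs {a, b, c} {(a, b), (b, a)} {({a, b}, c)}"
  assume "\<exists>E cf ca ad. is_GES E cf ca ad \<and> GES_configs E cf ca ad = ?C"
  then obtain E cf ca ad where ges: "is_GES E cf ca ad" and eq: "GES_configs E cf ca ad = ?C"
    by blast
  have "{a, c} \<in> ?C" "{b, c} \<in> ?C"
    using BES_config_bundle_member_target[OF assms] by blast+
  then have ac: "(GES_step E cf ca ad)\<^sup>*\<^sup>* {} {a, c}"
    and bc: "(GES_step E cf ca ad)\<^sup>*\<^sup>* {} {b, c}"
    by (simp_all flip: eq add: GES_configs_def)
  obtain X where X: "X \<subseteq> {a, c}" "c \<notin> X" "ic ca c \<subseteq> X"
      "\<forall>c' \<in> E. (c', c, c) \<in> ad \<longrightarrow> c' \<in> X"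
    using GES_config_entry[OF ac insertI2[OF singletonI]] .
  obtain Y where Y: "Y \<subseteq> {b, c}" "c \<notin> Y" "ic ca c \<subseteq> Y"
      "\<forall>c' \<in> E. (c', c, c) \<in> ad \<longrightarrow> c' \<in> Y"
    using GES_config_entry[OF bc insertI2[OF singletonI]] .
  have "X \<inter> Y = {}"
    using X(1,2) Y(1,2) assms(1) by blast
  then have "ic ca c = {}" "\<forall>c' \<in> E. (c', c, c) \<notin> ad"
    using X(3) Y(3) X(4) Y(4) by auto
  moreover have "c \<in> E"
    using GES_config_subset[OF ac] by blast
  moreover have "(c, c) \<notin> cf"
    using ges by (simp add: is_GES_def irrefl_def)
  ultimately have "GES_step E cf ca ad {} {c}"
    by (intro GES_step_from_empty_singleton)
  then have "{c} \<in> ?C"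
    by (simp flip: eq add: GES_configs_def)
  from singleton_BES_config_no_bundle[OF this, of "{a, b}"] show False
    by simp
qed

end
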